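(* Let $n\ge 3$ and let $H$ be a $3$-uniform hypergraph on $[n]$ such that every $4$-subset of $[n]$ contains an edge of $H$. Then $|\{F\in H^{<_L}: 1\in F\}|\ge\binom{n-2}{2}$, where $H^{<_L}$ is the exterior shifting of $H$ with respect to the lexicographic order.
   Context: The lexicographic order $<_L$ on $\binom{[n]}{3}$: $S<_L T$ iff $\min(S\triangle T)\in S$. Let $X=(x_{ij})$ be an $n\times n$ matrix of independent indeterminates over $\mathbb{Q}$ and $C_3(X)$ its third compound matrix, with entries $c_{S,T}=\det(x_{ij})_{i\in S,j\in T}$ for $3$-subsets $S,T$. The exterior shifting $H^{<_L}$ is obtained by going through $\binom{[n]}{3}$ in increasing $<_L$ order and selecting $S$ iff the row of $C_3(X)$ indexed by $S$, restricted to the columns indexed by $H$, is linearly independent over $\mathbb{Q}(x_{ij})$ of the previously selected rows. Equivalently, the claim says the submatrix of $C_3(X)$ with rows indexed by the $3$-subsets containing $1$ and columns indexed by $H$ has rank at least $\binom{n-2}{2}$. *)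

theory Defs
  imports "HOL-Library.Poly_Mapping" "HOL-Library.Product_Lexorder"
          "HOL-Computational_Algebra.Fraction_Field"
          "Jordan_Normal_Form.Determinant"
begin

(* Polynomial ring Q[x_ij] : monomials are finitely supported exponent maps on
   variable indices (i,j); polynomials are finitely supported coefficient maps. *)
type_synonym qpoly = "((nat \<times> nat) \<Rightarrow>\<^sub>0 nat) \<Rightarrow>\<^sub>0 rat"

type_synonym qfun = "qpoly fract"

definition xvar :: "nat \<Rightarrow> nat \<Rightarrow> qfun" where
  "xvar i j = Fract (Poly_Mapping.single (Poly_Mapping.single (i, j) 1) 1) 1"

(* entry c_{S,T} of the third compound matrix C_3(X): the minor of X with rows S
   and columns T, both listed increasingly *)
definition compound3 :: "nat set \<Rightarrow> nat set \<Rightarrow> qfun" where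
  "compound3 S T =
     (let s = sorted_list_of_set S; t = sorted_list_of_set T
      in det (mat 3 3 (\<lambda>(a, b). xvar (s ! a) (t ! b))))"

definition lexless :: "nat set \<Rightarrow> nat set \<Rightarrow> bool" where
  "lexless S T \<longleftrightarrow> S \<noteq> T \<and> Min ((S - T) \<union> (T - S)) \<in> S"

definition triples :: "nat \<Rightarrow> nat set set" where
  "triples n = {S. S \<subseteq> {1..n} \<and> card S = 3}"

(* the row of C_3(X) indexed by S, restricted to the columns in H, is linearly
   independent over Q(x_ij) of the rows indexed by Sel (restricted to H) *)
definition row_indep :: "nat set set \<Rightarrow> nat set set \<Rightarrow> nat set \<Rightarrow> bool" where
  "row_indep H Sel S \<longleftrightarrow>
     \<not> (\<exists>coef :: nat set \<Rightarrow> qfun.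
          \<forall>T\<in>H. compound3 S T = (\<Sum>S'\<in>Sel. coef S' * compound3 S' T))"

fun greedy :: "nat set set \<Rightarrow> nat set set \<Rightarrow> nat set list \<Rightarrow> nat set set" where
  "greedy H Sel [] = Sel"
| "greedy H Sel (S # Ss) = greedy H (if row_indep H Sel S then insert S Sel else Sel) Ss"

definition lex_list :: "nat \<Rightarrow> nat set list" where
  "lex_list n = (SOME L. distinct L \<and> set L = triples n \<and> sorted_wrt lexless L)"

definition ext_shift_lex :: "nat \<Rightarrow> nat set set \<Rightarrow> nat set set" where
  "ext_shift_lex n H = greedy H {} (lex_list n)"

end

theory Submission
  imports Defs "Subresultants.More_Homomorphisms"
begin

text \<open>
  The rows of \<open>C\<^sub>3(X)\<close> indexed by triples through 1 come first in the lexicographic order,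
  so the triples through 1 selected by the shifting span all these rows (restricted to the
  columns of \<open>H\<close>). It therefore suffices to find a nonsingular square submatrix of size
  \<open>(n-2 choose 2)\<close> with such rows. Take rows \<open>{1} \<union> p\<close> for pairs \<open>p \<subseteq> [2,n]\<close> and columns
  edges \<open>e \<supseteq> p\<close> of \<open>H\<close>, ordered so that no pair lies in an earlier edge. Specializing
  \<open>x\<^sub>1\<^sub>j = x\<^sub>j\<^sub>j = 1\<close> and all other variables to 0 makes \<open>c\<^bsub>{1,a,b},T\<^esub>\<close> nonzero exactly
  when \<open>{a,b} \<subseteq> T\<close>, so the specialized submatrix is triangular with nonzero diagonal.

  The pairs and edges are built by induction on the number of vertices. The 4-set condition
  provides a vertex \<open>u \<noteq> 1\<close> whose link graph has at most two components, one containing 1;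
  a breadth-first enumeration of that link from the two roots contributes \<open>|U| - 3\<close> new pairs
  \<open>{b, u}\<close> with edges \<open>{parent b, b, u}\<close>, and \<open>(m-1 choose 2) + (m-1) = (m choose 2)\<close>.
\<close>

section \<open>Hypergraphs in which every 4-set contains an edge\<close>

definition every_4set_has_edge :: "'a set set \<Rightarrow> 'a set \<Rightarrow> bool" where
  "every_4set_has_edge H U \<longleftrightarrow> (\<forall>A. A \<subseteq> U \<and> card A = 4 \<longrightarrow> (\<exists>F\<in>H. F \<subseteq> A))"

lemma every_4set_has_edge_mono:
  "every_4set_has_edge H U \<Longrightarrow> U' \<subseteq> U \<Longrightarrow> every_4set_has_edge H U'"
  unfolding every_4set_has_edge_def by blast

lemma triple_in_edges_if_others_not:
  assumes cover: "every_4set_has_edge H U" and unif: "\<forall>F\<in>H. card F = 3"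
    and U: "{p, q, r, s} \<subseteq> U" "distinct [p, q, r, s]"
    and not_edges: "{p, q, r} \<notin> H" "{p, q, s} \<notin> H" "{p, r, s} \<notin> H"
  shows "{q, r, s} \<in> H"
proof -
  let ?A = "{p, q, r, s}"
  have "card ?A = 4" using U(2) by simp
  then obtain F where F: "F \<in> H" "F \<subseteq> ?A" using cover U(1) unfolding every_4set_has_edge_def by blast
  then have "card F = 3" using unif by blast
  then have "F \<noteq> ?A" using \<open>card ?A = 4\<close> by auto
  then obtain w where w: "w \<in> ?A" "w \<notin> F" using F(2) by blast
  then have "F = ?A - {w}"
    using F(2) \<open>card ?A = 4\<close> \<open>card F = 3\<close> by (intro card_subset_eq) auto
  then show ?thesis using w(1) F(1) not_edges U(2) by (auto simp: insert_Diff_if insert_commute)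
qed

definition link_edge :: "'a set set \<Rightarrow> 'a set \<Rightarrow> 'a \<Rightarrow> 'a \<Rightarrow> 'a \<Rightarrow> bool" where
  "link_edge H U u x y \<longleftrightarrow> x \<in> U \<and> y \<in> U \<and> x \<noteq> u \<and> y \<noteq> u \<and> x \<noteq> y \<and> {x, y, u} \<in> H"

lemma link_reach_if_edge:
  "{x, y, u} \<in> H \<Longrightarrow> x \<in> U \<Longrightarrow> y \<in> U \<Longrightarrow> x \<noteq> u \<Longrightarrow> y \<noteq> u \<Longrightarrow> (link_edge H U u)\<^sup>*\<^sup>* x y"
  by (cases "x = y") (auto simp: link_edge_def)

lemma not_edge_if_not_link_reach:
  "\<not> (link_edge H U u)\<^sup>*\<^sup>* a b \<Longrightarrow> a \<in> U \<Longrightarrow> b \<in> U \<Longrightarrow> a \<noteq> u \<Longrightarrow> b \<noteq> u \<Longrightarrow> {u, a, b} \<notin> H"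
  using link_reach_if_edge[of a b u H U] by (auto simp: insert_commute)

lemma link_reach_if_triples_not_edges:
  assumes "every_4set_has_edge H U" "\<forall>F\<in>H. card F = 3"
    and "{u, x, a, b} \<subseteq> U" "distinct [u, x, a, b]"
    and "{u, x, a} \<notin> H" "{u, x, b} \<notin> H" "{u, a, b} \<notin> H"
  shows "(link_edge H U x)\<^sup>*\<^sup>* a b"
proof -
  have "{x, a, b} \<in> H" using triple_in_edges_if_others_not[OF assms] .
  then show ?thesis using assms(3,4) by (intro link_reach_if_edge) (auto simp: insert_commute)
qed

text \<open>If \<open>x\<close> and \<open>y\<close> lie in different components of the link of \<open>u\<close>, then switching to the
  link of \<open>x\<close> merges everything into the components of \<open>v\<close> and \<open>u\<close>: every 4-set \<open>{u, x, a, b}\<close>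
  whose triples through \<open>u\<close> are not edges forces the edge \<open>{x, a, b}\<close>.\<close>

lemma link_reach_two_roots_switch:
  assumes cover: "every_4set_has_edge H U" and unif: "\<forall>F\<in>H. card F = 3"
    and U: "{v, u, x, y} \<subseteq> U" "distinct [v, u, x, y]"
    and apart: "\<not> (link_edge H U u)\<^sup>*\<^sup>* v x" "\<not> (link_edge H U u)\<^sup>*\<^sup>* v y"
      "\<not> (link_edge H U u)\<^sup>*\<^sup>* x y"
    and z: "z \<in> U - {x}"
  shows "(link_edge H U x)\<^sup>*\<^sup>* v z \<or> (link_edge H U x)\<^sup>*\<^sup>* u z"
proof -
  let ?R = "(link_edge H U u)\<^sup>*\<^sup>*" and ?S = "(link_edge H U x)\<^sup>*\<^sup>*"
  note forced = link_reach_if_triples_not_edges[OF cover unif]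
  have vx: "{u, x, v} \<notin> H" and xy: "{u, x, y} \<notin> H" and vy: "{u, v, y} \<notin> H"
    using not_edge_if_not_link_reach[OF apart(1)] not_edge_if_not_link_reach[OF apart(3)]
      not_edge_if_not_link_reach[OF apart(2)] U by (auto simp: insert_commute)
  have "?S v y" using forced[OF _ _ vx xy vy] U by (auto simp: insert_commute)
  then have via_y: "?S v b" if "?S y b" for b using that rtranclp_trans by metis
  show ?thesis
  proof (cases "z \<in> {v, u, y}")
    case True
    then show ?thesis using \<open>?S v y\<close> by auto
  next
    case False
    then have z': "z \<in> U" "distinct [u, x, y, z]" "distinct [u, x, v, z]" using z U by auto
    have xz: "{u, x, z} \<notin> H" if "\<not> ?R x z"
      using not_edge_if_not_link_reach[OF that] U z' by auto
    have yz: "{u, y, z} \<notin> H" if "\<not> ?R z y"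
      using not_edge_if_not_link_reach[OF that] U z' by (auto simp: insert_commute)
    consider "?R x z" "{u, x, z} \<in> H" | "?R x z" "{u, x, z} \<notin> H" | "\<not> ?R x z" "?R v z"
      | "\<not> ?R x z" "\<not> ?R v z" by blast
    then show ?thesis
    proof cases
      case 1
      then have "?S u z" using U z' link_reach_if_edge[of u z x H U] by (auto simp: insert_commute)
      then show ?thesis by blast
    next
      case 2
      then have "\<not> ?R z y" using apart(3) rtranclp_trans by metis
      then show ?thesis using forced[OF _ _ xy 2(2) yz] U z' via_y by simp
    next
      case 3
      then have "\<not> ?R z y" using apart(2) rtranclp_trans by metis
      then show ?thesis using forced[OF _ _ xy xz[OF 3(1)] yz] U z' via_y by simp
    next
      case 4
      then have "{u, v, z} \<notin> H" using not_edge_if_not_link_reach[of H U u v z] U z' by auto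
      then show ?thesis using forced[OF _ _ vx xz[OF 4(1)]] U z' by simp
    qed
  qed
qed

lemma link_reach_two_roots:
  assumes cover: "every_4set_has_edge H U" and unif: "\<forall>F\<in>H. card F = 3"
    and U: "v \<in> U" "u0 \<in> U" "u0 \<noteq> v"
  shows "\<exists>u\<in>U - {v}. \<exists>f\<in>U - {u}. \<forall>z\<in>U - {u}.
    (link_edge H U u)\<^sup>*\<^sup>* v z \<or> (link_edge H U u)\<^sup>*\<^sup>* f z"
proof -
  let ?R = "(link_edge H U u0)\<^sup>*\<^sup>*"
  consider "\<forall>z\<in>U - {u0}. ?R v z"
    | x where "x \<in> U - {u0}" "\<not> ?R v x" "\<forall>z\<in>U - {u0}. ?R v z \<or> ?R x z"
    | x y where "x \<in> U - {u0}" "y \<in> U - {u0}" "\<not> ?R v x" "\<not> ?R v y" "\<not> ?R x y"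
    by blast
  then show ?thesis
  proof cases
    case 1
    then show ?thesis using U by blast
  next
    case (2 x)
    then show ?thesis using U by blast
  next
    case (3 x y)
    then have "distinct [v, u0, x, y]" using U by auto
    then have "\<forall>z\<in>U - {x}. (link_edge H U x)\<^sup>*\<^sup>* v z \<or> (link_edge H U x)\<^sup>*\<^sup>* u0 z"
      using link_reach_two_roots_switch[OF cover unif _ _ 3(3-5)] U 3(1,2) by auto
    then show ?thesis using U 3(1,3) by (intro bexI[of _ x] bexI[of _ u0]) auto
  qed
qed

lemma rtranclp_leaves_set:
  assumes "r\<^sup>*\<^sup>* a y" "a \<in> Z" "y \<notin> Z"
  shows "\<exists>w x. w \<in> Z \<and> x \<notin> Z \<and> r w x"
  using assms by (induction rule: rtranclp_induct) blast+

lemma rooted_enumeration_exists: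
  assumes "finite W" and reach: "\<forall>x\<in>W. \<exists>r\<in>R. E\<^sup>*\<^sup>* r x" and closed: "\<forall>x y. E x y \<longrightarrow> y \<in> W"
  shows "\<exists>L par. distinct L \<and> set L = W - R \<and>
    (\<forall>i<length L. E (par i) (L ! i) \<and> par i \<in> R \<union> set (take i L))"
proof -
  have "\<exists>L par. length L = n \<and> distinct L \<and> set L \<subseteq> W - R \<and>
      (\<forall>i<length L. E (par i) (L ! i) \<and> par i \<in> R \<union> set (take i L))"
    if "n \<le> card (W - R)" for n
    using that
  proof (induction n)
    case (Suc n)
    then obtain L par where L: "length L = n" "distinct L" "set L \<subseteq> W - R"
      and par: "\<forall>i<length L. E (par i) (L ! i) \<and> par i \<in> R \<union> set (take i L)"
      by auto
    have "card (set L) < card (W - R)" using Suc.prems L(1,2) by (simp add: distinct_card)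
    then have "set L \<noteq> W - R" by auto
    then obtain y where y: "y \<in> W - R" "y \<notin> set L" using L(3) by blast
    then obtain r where "r \<in> R" "E\<^sup>*\<^sup>* r y" using reach by blast
    then obtain w x where wx: "w \<in> R \<union> set L" "x \<notin> R \<union> set L" "E w x"
      using rtranclp_leaves_set[of E r y "R \<union> set L"] y by blast
    let ?L = "L @ [x]" and ?par = "par(n := w)"
    have "\<forall>i<length ?L. E (?par i) (?L ! i) \<and> ?par i \<in> R \<union> set (take i ?L)"
      using par wx L(1) by (auto simp: nth_append less_Suc_eq)
    moreover have "set ?L \<subseteq> W - R" using L(3) wx closed by auto
    ultimately show ?case using L wx by (intro exI[of _ ?L] exI[of _ ?par]) auto
  qed simp
  then obtain L par where L: "length L = card (W - R)" "distinct L" "set L \<subseteq> W - R"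
    and par: "\<forall>i<length L. E (par i) (L ! i) \<and> par i \<in> R \<union> set (take i L)"
    by blast
  have "set L = W - R" using L \<open>finite W\<close> by (metis card_subset_eq distinct_card finite_Diff)
  then show ?thesis using L(2) par by blast
qed

text \<open>Adjoining \<open>v\<close> to the pairs gives the rows, and the edges the columns, of a square
  submatrix of the compound matrix whose specialization is triangular.\<close>

definition pair_staircase ::
    "'a set set \<Rightarrow> 'a set \<Rightarrow> 'a \<Rightarrow> nat \<Rightarrow> (nat \<Rightarrow> 'a set) \<Rightarrow> (nat \<Rightarrow> 'a set) \<Rightarrow> bool" where
  "pair_staircase H U v k P E \<longleftrightarrow>
     (\<forall>i<k. card (P i) = 2 \<and> P i \<subseteq> U - {v} \<and> P i \<subseteq> E i \<and> E i \<subseteq> U \<and> E i \<in> H) \<and>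
     (\<forall>i j. j < i \<longrightarrow> i < k \<longrightarrow> \<not> P i \<subseteq> E j)"

lemma pair_staircase_extend:
  assumes st: "pair_staircase H (U - {u}) v k P E" and u: "u \<in> U" "u \<noteq> v"
    and L: "distinct L" "set L \<subseteq> U - {u, v}"
    and par: "\<forall>i<length L. link_edge H U u (par i) (L ! i) \<and>
      (\<forall>j. i < j \<longrightarrow> j < length L \<longrightarrow> par i \<noteq> L ! j)"
  shows "pair_staircase H U v (k + length L)
    (\<lambda>i. if i < k then P i else {L ! (i - k), u})
    (\<lambda>i. if i < k then E i else {par (i - k), L ! (i - k), u})"
proof -
  have L_nth: "L ! i \<in> U" "L ! i \<noteq> u" "L ! i \<noteq> v" if "i < length L" for i
    using L(2) nth_mem[OF that] by auto
  have new: "card {L ! i, u} = 2 \<and> {L ! i, u} \<subseteq> U - {v} \<and> {L ! i, u} \<subseteq> {par i, L ! i, u} \<and>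
      {par i, L ! i, u} \<subseteq> U \<and> {par i, L ! i, u} \<in> H" if "i < length L" for i
    using L_nth[OF that] par that u by (auto simp: link_edge_def)
  have new_new: "\<not> {L ! i, u} \<subseteq> {par j, L ! j, u}" if "j < i" "i < length L" for i j
  proof
    assume "{L ! i, u} \<subseteq> {par j, L ! j, u}"
    moreover have "L ! i \<noteq> L ! j" using L(1) that by (simp add: nth_eq_iff_index_eq)
    ultimately have "L ! i = par j" using L_nth[OF that(2)] by auto
    then show False using par that less_trans by metis
  qed
  have old_new: "\<not> {L ! i, u} \<subseteq> E j" if "j < k" for i j
    using st that unfolding pair_staircase_def by blast
  let ?P = "\<lambda>i. if i < k then P i else {L ! (i - k), u}"
  let ?E = "\<lambda>i. if i < k then E i else {par (i - k), L ! (i - k), u}"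
  have "card (?P i) = 2 \<and> ?P i \<subseteq> U - {v} \<and> ?P i \<subseteq> ?E i \<and> ?E i \<subseteq> U \<and> ?E i \<in> H"
    if "i < k + length L" for i
  proof (cases "i < k")
    case True
    then show ?thesis using st unfolding pair_staircase_def by auto
  next
    case False
    then show ?thesis using new[of "i - k"] that by simp
  qed
  moreover have "\<not> ?P i \<subseteq> ?E j" if "j < i" "i < k + length L" for i j
  proof (cases "i < k")
    case True
    then show ?thesis using st that unfolding pair_staircase_def by simp
  next
    case False
    then show ?thesis
      using old_new new_new[of "j - k" "i - k"] that by (cases "j < k") simp_all
  qed
  ultimately show ?thesis unfolding pair_staircase_def by blast
qed

lemma link_enumeration:
  assumes "finite U" "v \<in> U" "u \<in> U" "u \<noteq> v" "f \<in> U - {u}"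
    and reach: "\<forall>z\<in>U - {u}. (link_edge H U u)\<^sup>*\<^sup>* v z \<or> (link_edge H U u)\<^sup>*\<^sup>* f z"
  shows "\<exists>L par. card U - 3 \<le> length L \<and> distinct L \<and> set L \<subseteq> U - {u, v} \<and>
    (\<forall>i<length L. link_edge H U u (par i) (L ! i) \<and>
      (\<forall>j. i < j \<longrightarrow> j < length L \<longrightarrow> par i \<noteq> L ! j))"
proof -
  have "\<forall>x y. link_edge H U u x y \<longrightarrow> y \<in> U - {u}" by (simp add: link_edge_def)
  then obtain L par where L: "distinct L" "set L = U - {u} - {v, f}"
    and par: "\<forall>i<length L. link_edge H U u (par i) (L ! i) \<and> par i \<in> {v, f} \<union> set (take i L)"
    using rooted_enumeration_exists[of "U - {u}" "{v, f}" "link_edge H U u"] assms by auto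
  have "card {v, f} \<le> 2" by (simp add: card_insert_if)
  moreover have "card (U - {u}) = card U - 1" using assms(1,3) by simp
  ultimately have "card U - 3 \<le> card (U - {u}) - card {v, f}" by linarith
  also have "\<dots> \<le> card (U - {u} - {v, f})" by (rule diff_card_le_card_Diff) simp
  finally have "card U - 3 \<le> card (U - {u} - {v, f})" .
  moreover have "par i \<noteq> L ! j" if "i < j" "j < length L" for i j
  proof -
    have "L ! j \<notin> {v, f}" using L(2) that(2) nth_mem by blast
    moreover have "L ! j \<notin> set (take i L)"
      using L(1) that by (auto simp: in_set_conv_nth nth_eq_iff_index_eq)
    moreover have "par i \<in> {v, f} \<union> set (take i L)" using par that by simp
    ultimately show ?thesis by auto
  qed
  ultimately show ?thesis
    using L par distinct_card[OF L(1)] by (intro exI[of _ L] exI[of _ par]) auto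
qed

lemma pair_staircase_step:
  assumes U: "finite U" "v \<in> U" "4 \<le> card U"
    and cover: "every_4set_has_edge H U" and unif: "\<forall>F\<in>H. card F = 3"
    and smaller: "\<And>u. u \<in> U \<Longrightarrow> u \<noteq> v \<Longrightarrow> \<exists>k P E. (card U - 3) choose 2 \<le> k \<and> pair_staircase H (U - {u}) v k P E"
  shows "\<exists>k P E. (card U - 2) choose 2 \<le> k \<and> pair_staircase H U v k P E"
proof -
  have "\<not> U \<subseteq> {v}" using U(3) card_mono[of "{v}" U] by auto
  then obtain u0 where "u0 \<in> U" "u0 \<noteq> v" by blast
  then obtain u f where u: "u \<in> U" "u \<noteq> v" and f: "f \<in> U - {u}"
    and reach: "\<forall>z\<in>U - {u}. (link_edge H U u)\<^sup>*\<^sup>* v z \<or> (link_edge H U u)\<^sup>*\<^sup>* f z"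
    using link_reach_two_roots[OF cover unif U(2)] by blast
  obtain k P E where k: "(card U - 3) choose 2 \<le> k" and st: "pair_staircase H (U - {u}) v k P E"
    using smaller[OF u] by blast
  obtain L par where L: "card U - 3 \<le> length L" "distinct L" "set L \<subseteq> U - {u, v}"
    and par: "\<forall>i<length L. link_edge H U u (par i) (L ! i) \<and>
      (\<forall>j. i < j \<longrightarrow> j < length L \<longrightarrow> par i \<noteq> L ! j)"
    using link_enumeration[OF U(1,2) u f reach] by blast
  have "Suc m choose 2 = (m choose 2) + m" for m by (simp add: numeral_2_eq_2)
  moreover have "card U - 2 = Suc (card U - 3)" using U(3) by simp
  ultimately have "(card U - 2) choose 2 \<le> k + length L" using k L(1) by simp
  then show ?thesis using pair_staircase_extend[OF st u L(2,3) par] by blast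
qed

lemma pair_staircase_exists:
  assumes "finite U" "v \<in> U" "every_4set_has_edge H U" "\<forall>F\<in>H. card F = 3"
  shows "\<exists>k P E. (card U - 2) choose 2 \<le> k \<and> pair_staircase H U v k P E"
  using assms
proof (induction "card U" arbitrary: U rule: less_induct)
  case less
  show ?case
  proof (cases "card U \<le> 3")
    case True
    then have "(card U - 2) choose 2 = 0" by (simp add: numeral_3_eq_3)
    then show ?thesis by (intro exI[of _ 0]) (simp add: pair_staircase_def)
  next
    case False
    have "\<exists>k P E. (card U - 3) choose 2 \<le> k \<and> pair_staircase H (U - {u}) v k P E"
      if "u \<in> U" "u \<noteq> v" for u
    proof -
      have card: "card (U - {u}) = card U - 1" using less.prems(1) that(1) by simp
      have "every_4set_has_edge H (U - {u})"
        using every_4set_has_edge_mono[OF less.prems(3)] by blast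
      then have "\<exists>k P E. (card (U - {u}) - 2) choose 2 \<le> k \<and> pair_staircase H (U - {u}) v k P E"
        using less.prems(1,2,4) that False card by (intro less.hyps) auto
      moreover have "card (U - {u}) - 2 = card U - 3" using card by simp
      ultimately show ?thesis by simp
    qed
    then show ?thesis
      using pair_staircase_step[OF less.prems(1,2) _ less.prems(3,4)] False by simp
  qed
qed

section \<open>Specializing the compound matrix\<close>

lemma det_2x2:
  assumes A: "A \<in> carrier_mat 2 2"
  shows "det A = A $$ (0,0) * A $$ (1,1) - A $$ (0,1) * A $$ (1,0)"
proof -
  have cof: "cofactor A 0 j = (-1) ^ j * mat_delete A 0 j $$ (0,0)" for j
    using mat_delete_carrier[OF A] by (simp add: cofactor_def det_single)
  have "det A = (\<Sum>j<2. A $$ (0,j) * cofactor A 0 j)"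
    by (rule laplace_expansion_row[OF A]) simp
  also have "\<dots> = A $$ (0,0) * cofactor A 0 0 + A $$ (0,1) * cofactor A 0 1"
    by (simp add: numeral_2_eq_2)
  finally show ?thesis
    using A by (simp add: cof mat_delete_def numeral_2_eq_2)
qed

lemma det_3x3:
  assumes A: "A \<in> carrier_mat 3 3"
  shows "det A =
      A $$ (0,0) * A $$ (1,1) * A $$ (2,2) - A $$ (0,0) * A $$ (1,2) * A $$ (2,1)
    - A $$ (0,1) * A $$ (1,0) * A $$ (2,2) + A $$ (0,1) * A $$ (1,2) * A $$ (2,0)
    + A $$ (0,2) * A $$ (1,0) * A $$ (2,1) - A $$ (0,2) * A $$ (1,1) * A $$ (2,0)"
proof -
  let ?D = "\<lambda>j. mat_delete A 0 j"
  have cof: "cofactor A 0 j = (-1) ^ j * (?D j $$ (0,0) * ?D j $$ (1,1) - ?D j $$ (0,1) * ?D j $$ (1,0))" for j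
    using mat_delete_carrier[OF A] by (simp add: cofactor_def det_2x2)
  have "det A = (\<Sum>j<3. A $$ (0,j) * cofactor A 0 j)"
    by (rule laplace_expansion_row[OF A]) simp
  also have "\<dots> = A $$ (0,0) * cofactor A 0 0 + A $$ (0,1) * cofactor A 0 1 + A $$ (0,2) * cofactor A 0 2"
    by (simp add: eval_nat_numeral)
  finally show ?thesis
    using A by (simp add: cof mat_delete_def numeral_2_eq_2 algebra_simps)
qed

definition minor3 :: "(nat \<Rightarrow> nat \<Rightarrow> 'a :: comm_ring_1) \<Rightarrow> nat set \<Rightarrow> nat set \<Rightarrow> 'a" where
  "minor3 M S T =
     (let s = sorted_list_of_set S; t = sorted_list_of_set T
      in det (mat 3 3 (\<lambda>(a, b). M (s ! a) (t ! b))))"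

lemma compound3_eq_minor3: "compound3 = minor3 xvar"
  by (intro ext) (simp add: compound3_def minor3_def)

lemma (in comm_ring_hom) hom_minor3: "hom (minor3 M S T) = minor3 (\<lambda>i j. hom (M i j)) S T"
  unfolding minor3_def Let_def hom_det[symmetric] by (intro arg_cong[where f = det] eq_matI) auto

lemma minor3_sorted:
  assumes "sorted_list_of_set S = [a, b, c]" "sorted_list_of_set T = [x, y, z]"
  shows "minor3 M S T =
      M a x * M b y * M c z - M a x * M b z * M c y - M a y * M b x * M c z
    + M a y * M b z * M c x + M a z * M b x * M c y - M a z * M b y * M c x"
  unfolding minor3_def Let_def assms by (subst det_3x3) (simp_all add: numeral_2_eq_2)

text \<open>Evaluation of a polynomial at the 0/1-point \<open>x\<^sub>v = [v \<in> Z]\<close>.\<close>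

definition eval_indicator :: "'v set \<Rightarrow> (('v \<Rightarrow>\<^sub>0 nat) \<Rightarrow>\<^sub>0 'a :: comm_ring_1) \<Rightarrow> 'a" where
  "eval_indicator Z p =
     (\<Sum>m\<in>Poly_Mapping.keys p. Poly_Mapping.lookup p m * of_bool (Poly_Mapping.keys m \<subseteq> Z))"

lemma eval_indicator_add: "eval_indicator Z (p + q) = eval_indicator Z p + eval_indicator Z q"
  unfolding eval_indicator_def by (rule setsum_keys_plus_distrib) (simp_all add: distrib_right)

lemma eval_indicator_zero: "eval_indicator Z 0 = 0"
  by (simp add: eval_indicator_def)

lemma eval_indicator_sum: "eval_indicator Z (sum f A) = (\<Sum>x\<in>A. eval_indicator Z (f x))"
  by (induction A rule: infinite_finite_induct) (simp_all add: eval_indicator_add eval_indicator_zero)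

lemma eval_indicator_single:
  "eval_indicator Z (Poly_Mapping.single m c) = c * of_bool (Poly_Mapping.keys m \<subseteq> Z)"
  by (simp add: eval_indicator_def)

lemma keys_add_nat:
  "Poly_Mapping.keys (m + m' :: 'v \<Rightarrow>\<^sub>0 nat) = Poly_Mapping.keys m \<union> Poly_Mapping.keys m'"
  by (auto simp: in_keys_iff lookup_add)

lemma poly_mapping_sum_single:
  "p = (\<Sum>m\<in>Poly_Mapping.keys p. Poly_Mapping.single m (Poly_Mapping.lookup p m))"
  by (rule poly_mapping_eqI) (auto simp: lookup_sum lookup_single when_def in_keys_iff)

lemma eval_indicator_mult: "eval_indicator Z (p * q) = eval_indicator Z p * eval_indicator Z q"
proof -
  let ?c = "Poly_Mapping.lookup" and ?keys = "Poly_Mapping.keys"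
  let ?ind = "\<lambda>m. of_bool (?keys m \<subseteq> Z) :: 'a"
  have "p * q = (\<Sum>m\<in>?keys p. \<Sum>m'\<in>?keys q. Poly_Mapping.single (m + m') (?c p m * ?c q m'))"
    by (subst (1 2) poly_mapping_sum_single) (simp add: sum_product mult_single)
  then have "eval_indicator Z (p * q) =
      (\<Sum>m\<in>?keys p. \<Sum>m'\<in>?keys q. (?c p m * ?ind m) * (?c q m' * ?ind m'))"
    by (simp add: eval_indicator_sum eval_indicator_single keys_add_nat of_bool_conj mult_ac)
  also have "\<dots> = eval_indicator Z p * eval_indicator Z q"
    by (simp only: eval_indicator_def sum_product)
  finally show ?thesis .
qed

interpretation eval_indicator_hom: comm_ring_hom "eval_indicator Z"
  by unfold_locales (simp_all add: eval_indicator_add eval_indicator_mult eval_indicator_zero,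
      simp add: eval_indicator_def)

definition var :: "'v \<Rightarrow> ('v \<Rightarrow>\<^sub>0 nat) \<Rightarrow>\<^sub>0 'a :: comm_ring_1" where
  "var v = Poly_Mapping.single (Poly_Mapping.single v 1) 1"

lemma eval_indicator_var: "eval_indicator Z (var v) = of_bool (v \<in> Z)"
  by (simp add: var_def eval_indicator_single)

lemma xvar_eq_to_fract_var: "xvar = (\<lambda>i j. to_fract (var (i, j)))"
  by (intro ext) (simp add: xvar_def var_def to_fract_def)

lemma sorted_list_of_set_card_3:
  assumes "card T = 3"
  obtains x y z where "sorted_list_of_set T = [x, y, z]" "x < y" "y < z" "T = {x, y, z}"
proof -
  have "finite T" using assms by (intro card_ge_0_finite) simp
  then have len: "length (sorted_list_of_set T) = 3" and set: "set (sorted_list_of_set T) = T"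
    using assms by simp_all
  then obtain x y z where xyz: "sorted_list_of_set T = [x, y, z]"
    by (metis (no_types, opaque_lifting) length_0_conv length_Suc_conv numeral_3_eq_3)
  moreover have "x < y" "y < z"
    using sorted_list_of_set.strict_sorted_key_list_of_set[of T] xyz by auto
  moreover have "T = {x, y, z}" using set xyz by auto
  ultimately show ?thesis by (rule that)
qed

lemma minor3_first_row_ones_ne_0_iff:
  fixes p T :: "nat set"
  assumes p: "card p = 2" "\<forall>a\<in>p. 1 < a" and T: "card T = 3"
  shows "minor3 (\<lambda>i j. of_bool (i = 1 \<or> i = j) :: 'a :: comm_ring_1) (insert 1 p) T \<noteq> 0
    \<longleftrightarrow> p \<subseteq> T"
proof -
  obtain a b where ab: "p = {a, b}" "a < b"
    using p(1) by (metis card_2_iff insert_commute linorder_neqE_nat)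
  have a: "1 < a" using p(2) ab by simp
  have rows: "sorted_list_of_set (insert 1 p) = [1, a, b]"
    using a ab by (intro sorted_list_of_set_unique[THEN iffD1]) auto
  obtain x y z where xyz: "sorted_list_of_set T = [x, y, z]" "x < y" "y < z" "T = {x, y, z}"
    using sorted_list_of_set_card_3[OF T] .
  have unit_row: "of_bool (i = 1 \<or> i = j) = (of_bool (i = j) :: 'a)" if "1 < i" for i j :: nat
    using that by auto
  have minor: "minor3 (\<lambda>i j. of_bool (i = 1 \<or> i = j) :: 'a) (insert 1 p) T =
      of_bool (a = y \<and> b = z) - of_bool (a = z \<and> b = y)
    - of_bool (a = x \<and> b = z) + of_bool (a = z \<and> b = x)
    + of_bool (a = x \<and> b = y) - of_bool (a = y \<and> b = x)"
    unfolding minor3_sorted[OF rows xyz(1)] using a ab by (simp add: unit_row of_bool_conj)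
  show ?thesis
  proof (cases "p \<subseteq> T")
    case True
    then have "a \<in> {x, y, z}" "b \<in> {x, y, z}" using xyz(4) ab(1) by auto
    then have "(a = x \<and> b = y) \<or> (a = x \<and> b = z) \<or> (a = y \<and> b = z)"
      using xyz(2,3) ab(2) by auto
    then show ?thesis using True xyz(2,3) minor by (elim disjE) simp_all
  next
    case False
    then have "a \<notin> {x, y, z} \<or> b \<notin> {x, y, z}" using xyz(4) ab(1) by auto
    then have vanish: "of_bool (a = y \<and> b = z) = (0 :: 'a)" "of_bool (a = z \<and> b = y) = (0 :: 'a)"
      "of_bool (a = x \<and> b = z) = (0 :: 'a)" "of_bool (a = z \<and> b = x) = (0 :: 'a)"
      "of_bool (a = x \<and> b = y) = (0 :: 'a)" "of_bool (a = y \<and> b = x) = (0 :: 'a)"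
      by auto
    then show ?thesis using False unfolding minor vanish by simp
  qed
qed

lemma det_ne_0_if_upper_triangular:
  fixes A :: "'a :: idom mat"
  assumes "A \<in> carrier_mat k k" "upper_triangular A" "\<forall>i<k. A $$ (i, i) \<noteq> 0"
  shows "det A \<noteq> 0"
  using assms by (auto simp: det_upper_triangular prod_list_zero_iff diag_mat_def)

lemma det_compound3_ne_0_if_specialization_triangular:
  fixes Z :: "(nat \<times> nat) set"
  defines "M \<equiv> \<lambda>i j. of_bool ((i, j) \<in> Z) :: rat"
  assumes diag: "\<forall>i<k. minor3 M (R i) (C i) \<noteq> 0"
    and lower: "\<forall>i j. j < i \<longrightarrow> i < k \<longrightarrow> minor3 M (R i) (C j) = 0"
  shows "det (mat k k (\<lambda>(i, j). compound3 (R i) (C j))) \<noteq> 0"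
proof -
  define P :: "qpoly mat" where "P = mat k k (\<lambda>(i, j). minor3 (\<lambda>a b. var (a, b)) (R i) (C j))"
  have "map_mat (eval_indicator Z) P = mat k k (\<lambda>(i, j). minor3 M (R i) (C j))"
    by (auto simp: P_def M_def eval_indicator_hom.hom_minor3 eval_indicator_var)
  then have "det (map_mat (eval_indicator Z) P) \<noteq> 0"
    using diag lower by (intro det_ne_0_if_upper_triangular) (auto simp: upper_triangular_def)
  then have "det P \<noteq> 0" by auto
  moreover have "mat k k (\<lambda>(i, j). compound3 (R i) (C j)) = map_mat to_fract P"
    by (intro eq_matI) (auto simp: P_def compound3_eq_minor3 xvar_eq_to_fract_var to_fract_hom.hom_minor3)
  ultimately show ?thesis by simp
qed

lemma det_eq_0_if_zero_col:
  assumes A: "A \<in> carrier_mat k k" and l: "l < k" and zero: "\<forall>i<k. A $$ (i, l) = 0"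
  shows "det A = 0"
proof -
  have "(\<Prod>i = 0..<k. A $$ (i, p i)) = 0" if p: "p permutes {0..<k}" for p
  proof (rule prod_zero)
    show "\<exists>i\<in>{0..<k}. A $$ (i, p i) = 0"
    proof
      show "inv_into UNIV p l \<in> {0..<k}" using l permutes_in_image[OF permutes_inv[OF p]] by simp
      then show "A $$ (inv_into UNIV p l, p (inv_into UNIV p l)) = 0"
        using zero permutes_inverses(1)[OF p] by simp
    qed
  qed simp
  then show ?thesis unfolding det_def'[OF A] by (intro sum.neutral) simp
qed

lemma det_eq_0_if_factors_through:
  fixes A :: "'a :: comm_ring_1 mat"
  assumes A: "A \<in> carrier_mat k k" and I: "finite I" "card I < k"
    and factor: "\<forall>i<k. \<forall>j<k. A $$ (i, j) = (\<Sum>s\<in>I. a i s * b s j)"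
  shows "det A = 0"
proof -
  obtain ss where ss: "set ss = I" "distinct ss" using finite_distinct_list[OF I(1)] by blast
  define m where "m = length ss"
  have m: "m < k" using I(2) ss distinct_card m_def by metis
  define C where "C = mat k k (\<lambda>(i, l). if l < m then a i (ss ! l) else 0)"
  define B where "B = mat k k (\<lambda>(l, j). if l < m then b (ss ! l) j else 0)"
  have C: "C \<in> carrier_mat k k" and B: "B \<in> carrier_mat k k" unfolding C_def B_def by auto
  have "A = C * B"
  proof (rule eq_matI)
    fix i j assume "i < dim_row (C * B)" "j < dim_col (C * B)"
    then have ij: "i < k" "j < k" using C B by auto
    have "(C * B) $$ (i, j) = (\<Sum>l\<in>{0..<k}. C $$ (i, l) * B $$ (l, j))"
      using ij C B by (simp add: scalar_prod_def)
    also have "\<dots> = (\<Sum>l\<in>{0..<m}. a i (ss ! l) * b (ss ! l) j)"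
      using ij m by (intro sum.mono_neutral_cong_right) (auto simp: C_def B_def)
    also have "\<dots> = (\<Sum>s\<in>I. a i s * b s j)"
      using sum.reindex_bij_betw[OF bij_betw_nth[OF ss(2)], where g = "\<lambda>s. a i s * b s j"] ss(1) m_def
      by (simp add: atLeast0LessThan)
    finally show "A $$ (i, j) = (C * B) $$ (i, j)" using factor ij by simp
  qed (use A C B in auto)
  moreover have "det C = 0"
    using m by (intro det_eq_0_if_zero_col[OF C, of m]) (auto simp: C_def)
  ultimately show ?thesis using det_mult[OF C B] by simp
qed

section \<open>Spanning by the shifted triples\<close>

definition row_spanned :: "nat set set \<Rightarrow> nat set set \<Rightarrow> nat set \<Rightarrow> bool" where
  "row_spanned H Sel S \<longleftrightarrow>
     (\<exists>coef. \<forall>T\<in>H. compound3 S T = (\<Sum>S'\<in>Sel. coef S' * compound3 S' T))"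

lemma row_indep_iff_not_row_spanned: "row_indep H Sel S \<longleftrightarrow> \<not> row_spanned H Sel S"
  by (simp add: row_indep_def row_spanned_def)

lemma row_spanned_mono:
  assumes "finite B" "A \<subseteq> B" "row_spanned H A S"
  shows "row_spanned H B S"
proof -
  obtain coef where coef: "\<forall>T\<in>H. compound3 S T = (\<Sum>S'\<in>A. coef S' * compound3 S' T)"
    using assms(3) unfolding row_spanned_def by blast
  have "(\<Sum>S'\<in>B. (if S' \<in> A then coef S' else 0) * compound3 S' T) =
      (\<Sum>S'\<in>A. coef S' * compound3 S' T)" for T
    using assms(1,2) by (intro sum.mono_neutral_cong_right) auto
  then show ?thesis
    using coef unfolding row_spanned_def by (intro exI[of _ "\<lambda>S'. if S' \<in> A then coef S' else 0"]) simp
qed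

lemma row_spanned_mem:
  assumes "finite Sel" "S \<in> Sel"
  shows "row_spanned H Sel S"
proof -
  have "(\<Sum>S'\<in>Sel. of_bool (S' = S) * compound3 S' T) = compound3 S T" for T
    using assms by (simp add: sum.delta')
  then show ?thesis unfolding row_spanned_def by (intro exI[of _ "\<lambda>S'. of_bool (S' = S)"]) simp
qed

lemma card_ge_if_spanned_rows_nonsingular:
  assumes Sel: "finite Sel" and spanned: "\<forall>i<k. row_spanned H Sel (R i)"
    and cols: "\<forall>j<k. C j \<in> H"
    and nonsingular: "det (mat k k (\<lambda>(i, j). compound3 (R i) (C j))) \<noteq> 0"
  shows "k \<le> card Sel"
proof (rule ccontr)
  assume "\<not> k \<le> card Sel"
  obtain coef where coef: "\<forall>i<k. \<forall>T\<in>H. compound3 (R i) T = (\<Sum>S\<in>Sel. coef i S * compound3 S T)"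
    using spanned unfolding row_spanned_def by metis
  have "\<forall>i<k. \<forall>j<k. mat k k (\<lambda>(i, j). compound3 (R i) (C j)) $$ (i, j) =
      (\<Sum>S\<in>Sel. coef i S * compound3 S (C j))"
    using coef cols by simp
  then have "det (mat k k (\<lambda>(i, j). compound3 (R i) (C j))) = 0"
    using Sel \<open>\<not> k \<le> card Sel\<close> by (intro det_eq_0_if_factors_through) auto
  then show False using nonsingular by contradiction
qed

lemma greedy_mono: "Sel \<subseteq> greedy H Sel L"
  by (induction L arbitrary: Sel) (auto, blast)

lemma greedy_subset: "greedy H Sel L \<subseteq> Sel \<union> set L"
proof (induction L arbitrary: Sel)
  case (Cons S L)
  show ?case using Cons.IH[of "if row_indep H Sel S then insert S Sel else Sel"] by auto
qed simp

lemma greedy_append: "greedy H Sel (L1 @ L2) = greedy H (greedy H Sel L1) L2"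
  by (induction L1 arbitrary: Sel) auto

lemma finite_greedy: "finite Sel \<Longrightarrow> finite (greedy H Sel L)"
  using greedy_subset by (rule finite_subset) simp

lemma row_spanned_greedy:
  assumes Sel0: "finite Sel0" and L: "L = L1 @ S # L2"
    and P: "P S" "\<forall>T\<in>Sel0 \<union> set L1. P T"
  shows "row_spanned H {F \<in> greedy H Sel0 L. P F} S"
proof -
  define Sel1 where "Sel1 = greedy H Sel0 L1"
  define Sel2 where "Sel2 = (if row_indep H Sel1 S then insert S Sel1 else Sel1)"
  have Sel1: "finite Sel1" "\<forall>T\<in>Sel1. P T"
    using finite_greedy[OF Sel0] greedy_subset[of H Sel0 L1] P(2) unfolding Sel1_def by blast+
  have spanned: "row_spanned H Sel2 S"
    using row_spanned_mem[OF _ insertI1] Sel1(1) unfolding Sel2_def row_indep_iff_not_row_spanned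
    by (cases "row_spanned H Sel1 S") auto
  have "greedy H Sel0 L = greedy H Sel2 L2"
    unfolding L greedy_append Sel1_def[symmetric] Sel2_def by simp
  moreover have "\<forall>T\<in>Sel2. P T" using Sel1(2) P(1) by (simp add: Sel2_def)
  ultimately have sub: "Sel2 \<subseteq> {F \<in> greedy H Sel0 L. P F}"
    using greedy_mono[of Sel2 H L2] by auto
  have "finite {F \<in> greedy H Sel0 L. P F}" using finite_greedy[OF Sel0] by simp
  from row_spanned_mono[OF this sub spanned] show ?thesis .
qed

lemma lexless_iff:
  assumes "finite S" "finite T"
  shows "lexless S T \<longleftrightarrow> (\<exists>a. a \<in> S \<and> a \<notin> T \<and> (\<forall>x<a. x \<in> S \<longleftrightarrow> x \<in> T))"
proof
  let ?D = "(S - T) \<union> (T - S)"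
  have fin: "finite ?D" using assms by simp
  {
    assume "lexless S T"
    then have "?D \<noteq> {}" "Min ?D \<in> S" unfolding lexless_def by blast+
    moreover have "x \<in> S \<longleftrightarrow> x \<in> T" if "x < Min ?D" for x
      using that Min_le[OF fin] by (meson UnI1 UnI2 DiffI not_le)
    ultimately show "\<exists>a. a \<in> S \<and> a \<notin> T \<and> (\<forall>x<a. x \<in> S \<longleftrightarrow> x \<in> T)"
      using Min_in[OF fin] by blast
  }
  assume "\<exists>a. a \<in> S \<and> a \<notin> T \<and> (\<forall>x<a. x \<in> S \<longleftrightarrow> x \<in> T)"
  then obtain a where a: "a \<in> S" "a \<notin> T" "\<forall>x<a. x \<in> S \<longleftrightarrow> x \<in> T" by blast
  then have "Min ?D = a" using fin by (intro Min_eqI) (auto simp: not_less[symmetric])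
  then show "lexless S T" unfolding lexless_def using a by auto
qed

lemma lexless_irrefl: "\<not> lexless S S"
  by (simp add: lexless_def)

lemma lexless_trans:
  assumes "finite S" "finite T" "finite U" "lexless S T" "lexless T U"
  shows "lexless S U"
proof -
  obtain a where a: "a \<in> S" "a \<notin> T" "\<forall>x<a. x \<in> S \<longleftrightarrow> x \<in> T"
    using assms lexless_iff by blast
  obtain b where b: "b \<in> T" "b \<notin> U" "\<forall>x<b. x \<in> T \<longleftrightarrow> x \<in> U"
    using assms lexless_iff by blast
  have "a < b \<or> b < a" using a b by (metis linorder_neqE_nat)
  then have "\<exists>c. c \<in> S \<and> c \<notin> U \<and> (\<forall>x<c. x \<in> S \<longleftrightarrow> x \<in> U)"
    using a b by (elim disjE) (metis order.strict_trans)+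
  then show ?thesis using lexless_iff assms by blast
qed

lemma lexless_total:
  assumes "finite S" "finite T" "S \<noteq> T"
  shows "lexless S T \<or> lexless T S"
proof -
  let ?D = "(S - T) \<union> (T - S)"
  have "Min ?D \<in> ?D" using assms by (intro Min_in) auto
  moreover have "(T - S) \<union> (S - T) = ?D" by blast
  ultimately show ?thesis unfolding lexless_def using assms by auto
qed

lemma lexless_mem_if_lower_bound:
  assumes "finite S" "finite T" "lexless T S" "a \<in> S" "\<forall>x\<in>T. a \<le> x"
  shows "a \<in> T"
proof (rule ccontr)
  assume "a \<notin> T"
  let ?D = "(T - S) \<union> (S - T)"
  have "Min ?D \<le> a" using assms \<open>a \<notin> T\<close> by (intro Min_le) auto
  moreover have "Min ?D \<in> T" using assms(3) unfolding lexless_def by blast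
  ultimately show False using assms(5) \<open>a \<notin> T\<close> by (metis antisym)
qed

lemma sorted_wrt_list_of_set_exists:
  assumes "finite A"
    and total: "\<forall>x\<in>A. \<forall>y\<in>A. x \<noteq> y \<longrightarrow> R x y \<or> R y x"
    and trans: "\<forall>x\<in>A. \<forall>y\<in>A. \<forall>z\<in>A. R x y \<longrightarrow> R y z \<longrightarrow> R x z"
    and irrefl: "\<forall>x\<in>A. \<not> R x x"
  shows "\<exists>L. distinct L \<and> set L = A \<and> sorted_wrt R L"
proof -
  have "\<exists>L. distinct L \<and> set L = B \<and> sorted_wrt R L" if "B \<subseteq> A" for B
    using finite_subset[OF that assms(1)] that
  proof (induction B rule: finite_induct)
    case (insert x B)
    then obtain L where L: "distinct L" "set L = B" "sorted_wrt R L" by blast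
    define L1 where "L1 = filter (\<lambda>y. R y x) L"
    define L2 where "L2 = filter (\<lambda>y. R x y) L"
    have x: "x \<in> A" "x \<notin> B" and B: "B \<subseteq> A" using insert by auto
    have before_or_after: "R y x \<or> R x y" if "y \<in> B" for y
      using that x B total by (metis subsetD)
    have not_both: "\<not> (R y x \<and> R x y)" if "y \<in> B" for y
      using that x B trans irrefl by (metis subsetD)
    have "set L1 \<inter> set L2 = {}" using not_both L(2) by (auto simp: L1_def L2_def)
    then have "distinct (L1 @ x # L2)"
      using L(1,2) x(2) by (simp add: L1_def L2_def)
    moreover have "set (L1 @ x # L2) = insert x B"
      using L(2) before_or_after by (auto simp: L1_def L2_def)
    moreover have "sorted_wrt R (L1 @ x # L2)"
    proof -
      have "R a b" if "a \<in> set L1" "b \<in> set L2" for a b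
        using that L(2) x B trans by (simp add: L1_def L2_def) blast
      then show ?thesis
        using L(3) by (simp add: sorted_wrt_append sorted_wrt_filter L1_def L2_def)
    qed
    ultimately show ?case by blast
  qed simp
  then show ?thesis by blast
qed

lemma lex_list: "distinct (lex_list n) \<and> set (lex_list n) = triples n \<and> sorted_wrt lexless (lex_list n)"
proof -
  have fin: "finite (triples n)" unfolding triples_def by (rule finite_subset[of _ "Pow {1..n}"]) auto
  have elems: "\<forall>S\<in>triples n. finite S" unfolding triples_def using finite_subset by auto
  have "\<forall>S\<in>triples n. \<forall>T\<in>triples n. S \<noteq> T \<longrightarrow> lexless S T \<or> lexless T S"
    using elems by (simp add: lexless_total)
  moreover have "\<forall>S\<in>triples n. \<forall>T\<in>triples n. \<forall>U\<in>triples n. lexless S T \<longrightarrow> lexless T U \<longrightarrow> lexless S U"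
    using elems by (metis lexless_trans)
  ultimately have "\<exists>L. distinct L \<and> set L = triples n \<and> sorted_wrt lexless L"
    by (rule sorted_wrt_list_of_set_exists[OF fin]) (simp add: lexless_irrefl)
  then show ?thesis unfolding lex_list_def by (rule someI_ex)
qed

text \<open>Every triple lexicographically before a triple through 1 passes through 1 itself.\<close>

lemma row_spanned_ext_shift_lex:
  assumes S: "S \<in> triples n" "1 \<in> S"
  shows "row_spanned H {F \<in> ext_shift_lex n H. 1 \<in> F} S"
proof -
  obtain L1 L2 where L: "lex_list n = L1 @ S # L2"
    using S(1) lex_list by (metis split_list)
  have "1 \<in> T" if "T \<in> set L1" for T
  proof (rule lexless_mem_if_lower_bound[where S = S])
    have "T \<in> triples n" using that L lex_list by (metis UnI1 set_append)
    then show "finite T" "\<forall>x\<in>T. 1 \<le> x" unfolding triples_def by (auto intro: finite_subset)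
    show "finite S" using S(1) unfolding triples_def by (auto intro: finite_subset)
    show "lexless T S" using that lex_list[of n] unfolding L by (simp add: sorted_wrt_append)
  qed (use S in simp)
  then show ?thesis
    unfolding ext_shift_lex_def using S(2) by (intro row_spanned_greedy[OF _ L]) auto
qed

lemma pair_staircase_rows_in_triples:
  assumes st: "pair_staircase H {1..n} 1 k P E" and "1 \<le> n" "i < k"
  shows "insert 1 (P i) \<in> triples n"
proof -
  have P: "card (P i) = 2" "P i \<subseteq> {1..n} - {1}"
    using st assms(3) unfolding pair_staircase_def by simp_all
  then have "finite (P i)" "1 \<notin> P i" "P i \<subseteq> {1..n}" by (auto intro: card_ge_0_finite)
  then show ?thesis using P(1) assms(2) unfolding triples_def by (simp add: card_insert_disjoint)
qed

lemma det_compound3_pair_staircase_ne_0: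
  assumes st: "pair_staircase H {1..n} 1 k P E" and unif: "\<forall>F\<in>H. card F = 3"
  shows "det (mat k k (\<lambda>(i, j). compound3 (insert 1 (P i)) (E j))) \<noteq> 0"
proof -
  let ?Z = "{(a, b). a = 1 \<or> a = b}"
  let ?M = "\<lambda>a b. of_bool ((a, b) \<in> ?Z) :: rat"
  have minor_ne_0: "minor3 ?M (insert 1 (P i)) (E j) \<noteq> 0 \<longleftrightarrow> P i \<subseteq> E j"
    if "i < k" "j < k" for i j
  proof -
    have "card (P i) = 2" "P i \<subseteq> {1..n} - {1}" "E j \<in> H"
      using st that unfolding pair_staircase_def by simp_all
    then have "card (P i) = 2" "\<forall>a\<in>P i. 1 < a" "card (E j) = 3" using unif by auto
    from minor3_first_row_ones_ne_0_iff[OF this, where 'a = rat] show ?thesis by simp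
  qed
  have "\<forall>i<k. minor3 ?M (insert 1 (P i)) (E i) \<noteq> 0"
    using minor_ne_0 st unfolding pair_staircase_def by simp
  moreover have "\<forall>i j. j < i \<longrightarrow> i < k \<longrightarrow> minor3 ?M (insert 1 (P i)) (E j) = 0"
    using minor_ne_0 st unfolding pair_staircase_def by (meson less_trans)
  ultimately show ?thesis by (rule det_compound3_ne_0_if_specialization_triangular)
qed

theorem mainTheorem9:
  fixes n :: nat and H :: "nat set set"
  assumes "n \<ge> 3"
    and "H \<subseteq> triples n"
    and "\<forall>A. A \<subseteq> {1..n} \<and> card A = 4 \<longrightarrow> (\<exists>F\<in>H. F \<subseteq> A)"
  shows "card {F \<in> ext_shift_lex n H. 1 \<in> F} \<ge> (n - 2) choose 2"
proof -
  let ?Sel = "{F \<in> ext_shift_lex n H. 1 \<in> F}"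
  have unif: "\<forall>F\<in>H. card F = 3" using assms(2) unfolding triples_def by auto
  obtain k P E where k: "(n - 2) choose 2 \<le> k" and st: "pair_staircase H {1..n} 1 k P E"
    using pair_staircase_exists[of "{1..n}" 1 H] assms(1,3) unif
    unfolding every_4set_has_edge_def by auto
  have "\<forall>i<k. insert 1 (P i) \<in> triples n" using pair_staircase_rows_in_triples[OF st] assms(1) by simp
  then have "\<forall>i<k. row_spanned H ?Sel (insert 1 (P i))"
    by (intro allI impI row_spanned_ext_shift_lex) simp_all
  moreover have "\<forall>j<k. E j \<in> H" using st unfolding pair_staircase_def by simp
  moreover have "finite ?Sel" unfolding ext_shift_lex_def by (simp add: finite_greedy)
  ultimately have "k \<le> card ?Sel"
    using det_compound3_pair_staircase_ne_0[OF st unif]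
    by (intro card_ge_if_spanned_rows_nonsingular) auto
  then show ?thesis using k by simp
qed

end
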